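(* Let $\tau:\mathbb{F}_p((t))^d\to\mathbb{F}_p((t))^d$, $(f_1,\dots,f_d)\mapsto(tf_1,\dots,tf_d)$, and let $\phi:\mathbb{F}_p((t))\to\mathrm{Aut}(\mathbb{F}_p((t))^d)$ be a continuous homomorphism satisfying $\phi(tf)=\tau\circ\phi(f)\circ\tau^{-1}$ for all $f$. Suppose that for every $f\in\mathbb{F}_p((t))$ the block matrix of $\phi(f)$ is lower triangular, i.e. $\phi(f)_{i,j}=0$ whenever $j>i$. Let $\mathcal{A}$ be the subalgebra of $\mathrm{End}(\mathbb{F}_p((t))^d)$ generated by $\{\phi(t^r)-\mathrm{Id}: r\in\mathbb{Z}\}$ and $\mathcal{A}^d=\{a_1\cdots a_d : a_1,\dots,a_d\in\mathcal{A}\}$. Then $B_{i,i}=0$ for every $B\in\mathcal{A}^d$ and every $i\in\mathbb{Z}$.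
   Context: $\mathrm{Aut}(\mathbb{F}_p((t))^d)$ has the Braconnier topology (basis of identity neighbourhoods $\{\alpha:\alpha(x)-x\in U,\ \alpha^{-1}(x)-x\in U\ \forall x\in K\}$, $K$ compact, $U$ an identity neighbourhood). $\mathrm{End}(\mathbb{F}_p((t))^d)$ is the ring of continuous additive endomorphisms. For $n\in\mathbb{Z}$ let $\mathbb{V}_n=\{(a_1t^n,\dots,a_dt^n):a_r\in\mathbb{F}_p\}\cong\mathbb{F}_p^d$, $\pi_n$ the projection onto $\mathbb{V}_n$ taking $t^n$-coefficients, and for $A\in\mathrm{End}$, $A_{i,j}=\pi_i\circ A|_{\mathbb{V}_j}$ as a $d\times d$ matrix over $\mathbb{F}_p$. *)

theory Defs
  imports "HOL-Analysis.Analysis" "HOL-Computational_Algebra.Formal_Laurent_Series"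
begin

text \<open>Throughout, 'k is a finite field of prime cardinality p (i.e. F_p), 'k fls is
F_p((t)) with its t-adic (metric) topology from the library, and
('k fls)^'d is F_p((t))^d with the product topology, d = CARD('d).\<close>

type_synonym ('k, 'd) lsv = "'k fls ^ 'd"

definition is_End :: "(('k::field, 'd::finite) lsv \<Rightarrow> ('k, 'd) lsv) \<Rightarrow> bool" where
  "is_End A \<longleftrightarrow> (\<forall>x y. A (x + y) = A x + A y) \<and> continuous_on UNIV A"

definition Aut :: "(('k::field, 'd::finite) lsv \<Rightarrow> ('k, 'd) lsv) set" where
  "Aut = {A. bij A \<and> is_End A \<and> is_End (inv A)}"

definition zero_nbhd :: "('k::field, 'd::finite) lsv set \<Rightarrow> bool" where
  "zero_nbhd U \<longleftrightarrow> (\<exists>S. open S \<and> 0 \<in> S \<and> S \<subseteq> U)"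

definition brac_nbhd :: "('k::field, 'd::finite) lsv set \<Rightarrow> ('k, 'd) lsv set
    \<Rightarrow> (('k, 'd) lsv \<Rightarrow> ('k, 'd) lsv) set" where
  "brac_nbhd K U = {\<alpha> \<in> Aut. \<forall>x\<in>K. \<alpha> x - x \<in> U \<and> inv \<alpha> x - x \<in> U}"

text \<open>The Braconnier topology on Aut: the group topology in which the sets
brac_nbhd K U (K compact, U an identity neighbourhood) form a basis of
identity neighbourhoods; the neighbourhoods of alpha are its translates.\<close>
definition braconnier_top :: "(('k::field, 'd::finite) lsv \<Rightarrow> ('k, 'd) lsv) topology" where
  "braconnier_top = topology (\<lambda>S. S \<subseteq> Aut \<and>
     (\<forall>\<alpha>\<in>S. \<exists>K U. compact K \<and> zero_nbhd U \<and> (\<lambda>\<beta>. \<alpha> \<circ> \<beta>) ` brac_nbhd K U \<subseteq> S))"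

definition tau :: "('k::field, 'd::finite) lsv \<Rightarrow> ('k, 'd) lsv" where
  "tau v = (\<chi> j. fls_X * v $ j)"

definition tau_inv :: "('k::field, 'd::finite) lsv \<Rightarrow> ('k, 'd) lsv" where
  "tau_inv v = (\<chi> j. fls_X_inv * v $ j)"

text \<open>The block A_{i,j} = pi_i o A restricted to V_j, as a d x d matrix over F_p:
column s is pi_i(A(t^j e_s)), row r is its r-th coordinate.\<close>
definition block :: "(('k::field, 'd::finite) lsv \<Rightarrow> ('k, 'd) lsv) \<Rightarrow> int \<Rightarrow> int \<Rightarrow> 'k ^ 'd ^ 'd" where
  "block A i j = (\<chi> r s. fls_nth ((A (\<chi> s'. if s' = s then fls_X_intpow j else 0)) $ r) i)"

inductive_set gen_alg :: "(('k::field, 'd::finite) lsv \<Rightarrow> ('k, 'd) lsv) set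
    \<Rightarrow> (('k, 'd) lsv \<Rightarrow> ('k, 'd) lsv) set" for G where
  gen: "a \<in> G \<Longrightarrow> a \<in> gen_alg G"
| zero: "(\<lambda>v. 0) \<in> gen_alg G"
| add: "a \<in> gen_alg G \<Longrightarrow> b \<in> gen_alg G \<Longrightarrow> (\<lambda>v. a v + b v) \<in> gen_alg G"
| smult: "a \<in> gen_alg G \<Longrightarrow> (\<lambda>v. \<chi> j. fls_const c * a v $ j) \<in> gen_alg G"
| comp: "a \<in> gen_alg G \<Longrightarrow> b \<in> gen_alg G \<Longrightarrow> a \<circ> b \<in> gen_alg G"

definition alg_pow :: "(('k::field, 'd::finite) lsv \<Rightarrow> ('k, 'd) lsv) set \<Rightarrow> nat
    \<Rightarrow> (('k, 'd) lsv \<Rightarrow> ('k, 'd) lsv) set" where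
  "alg_pow A n = {foldr (\<circ>) as id | as. length as = n \<and> set as \<subseteq> A}"

end

theory Submission
  imports Defs "HOL-Number_Theory.Residues"
begin

text \<open>Each \<phi> f is additive and continuous, and lower triangularity of its blocks makes it
  preserve the filtration of F_p((t))^d by t-adic order. Hence A \<mapsto> A_{i,i} is multiplicative
  on the maps occurring here. Since \<phi>(t^r)^p = \<phi>(p t^r) = 1, the blocks N_r = (\<phi>(t^r) - 1)_{i,i}
  are commuting nilpotent endomorphisms of F_p^d. The subspaces K_j of vectors killed by all
  products of j of the N_r form a flag which increases strictly until it is everything, so
  K_d = F_p^d. The (i,i)-block of every element of the algebra generated by the \<phi>(t^r) - 1 maps
  K_{j+1} into K_j, so that of a product of d such elements vanishes.\<close>

section \<open>Prime fields\<close>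

lemma CHAR_eq_CARD_if_prime:
  assumes "prime CARD('k::{field,finite})"
  shows "CHAR('k) = CARD('k)"
proof -
  have "CHAR('k) = 1 \<or> CHAR('k) = CARD('k)"
    using CHAR_dvd_CARD[where 'a = 'k] assms unfolding prime_nat_iff by blast
  then show ?thesis by simp
qed

lemma range_of_nat_prime_field:
  assumes "prime CARD('k::{field,finite})"
  shows "range (of_nat :: nat \<Rightarrow> 'k) = UNIV"
proof -
  have "card (of_nat ` {..<CARD('k)} :: 'k set) = CARD('k)"
    using CHAR_eq_CARD_if_prime[OF assms]
    by (subst card_image) (auto intro!: inj_onI simp: of_nat_eq_iff_cong_CHAR cong_def)
  then have "of_nat ` {..<CARD('k)} = (UNIV :: 'k set)"
    by (simp add: card_subset_eq)
  then show ?thesis by blast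
qed

text \<open>The name additive is qualified since, unqualified, it denotes the set-function notion of
  HOL-Analysis.\<close>
lemma additive_scale_of_nat:
  fixes f :: "'k::field ^ 'm \<Rightarrow> 'k ^ 'n"
  assumes "Modules.additive f"
  shows "f (of_nat n *s v) = of_nat n *s f v"
proof (induction n)
  case 0
  then show ?case using additive.zero[OF assms] by simp
next
  case (Suc n)
  have "f (of_nat (Suc n) *s v) = f (v + of_nat n *s v)"
    by (simp add: vector_sadd_rdistrib)
  also have "\<dots> = of_nat (Suc n) *s f v"
    using Suc additive.add[OF assms] by (simp add: vector_sadd_rdistrib)
  finally show ?case .
qed

lemma linear_if_additive_prime_field:
  fixes f :: "'k::{field,finite} ^ 'm \<Rightarrow> 'k ^ 'n"
  assumes "prime CARD('k)" "Modules.additive f"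
  shows "Vector_Spaces.linear (*s) (*s) f"
proof -
  have "f (c *s v) = c *s f v" for c v
    using range_of_nat_prime_field[OF assms(1)] additive_scale_of_nat[OF assms(2)]
    by (metis UNIV_I imageE)
  then show ?thesis
    using additive.add[OF assms(2)] by (simp add: Vector_Spaces.linear_iff vec.vector_space_axioms)
qed

section \<open>Unipotent maps in characteristic p\<close>

lemma funpow_id_plus_binomial:
  fixes N :: "'k::field ^ 'd \<Rightarrow> 'k ^ 'd"
  assumes "Vector_Spaces.linear (*s) (*s) N"
  shows "((\<lambda>v. v + N v) ^^ k) w = (\<Sum>i\<le>k. of_nat (k choose i) *s (N ^^ i) w)"
proof (induction k)
  case 0
  then show ?case by simp
next
  case (Suc k)
  let ?x = "\<lambda>i. (N ^^ i) w"
  have "((\<lambda>v. v + N v) ^^ Suc k) w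
      = (\<Sum>i\<le>k. of_nat (k choose i) *s ?x i) + N (\<Sum>i\<le>k. of_nat (k choose i) *s ?x i)"
    using Suc by simp
  also have "N (\<Sum>i\<le>k. of_nat (k choose i) *s ?x i) = (\<Sum>i\<le>k. of_nat (k choose i) *s ?x (Suc i))"
    using assms by (simp add: vec.linear_sum vec.linear_scale)
  also have "(\<Sum>i\<le>k. of_nat (k choose i) *s ?x i) = (\<Sum>i\<le>Suc k. of_nat (k choose i) *s ?x i)"
    by (simp add: binomial_eq_0)
  also have "\<dots> = ?x 0 + (\<Sum>i\<le>k. of_nat (k choose Suc i) *s ?x (Suc i))"
    by (subst sum.atMost_Suc_shift) simp
  also have "?x 0 + (\<Sum>i\<le>k. of_nat (k choose Suc i) *s ?x (Suc i)) + (\<Sum>i\<le>k. of_nat (k choose i) *s ?x (Suc i))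
      = ?x 0 + (\<Sum>i\<le>k. of_nat (Suc k choose Suc i) *s ?x (Suc i))"
    by (simp add: sum.distrib[symmetric] vector_sadd_rdistrib add.commute)
  also have "\<dots> = (\<Sum>i\<le>Suc k. of_nat (Suc k choose i) *s ?x i)"
    by (subst sum.atMost_Suc_shift) simp
  finally show ?case .
qed

text \<open>(1 + N)^p = 1 + N^p, as p divides (p choose i) for 0 < i < p.\<close>
lemma nilpotent_if_unipotent_char:
  fixes N :: "'k::field ^ 'd \<Rightarrow> 'k ^ 'd"
  assumes "prime CHAR('k)" "Vector_Spaces.linear (*s) (*s) N"
    and "(\<lambda>v. v + N v) ^^ CHAR('k) = id"
  shows "N ^^ CHAR('k) = (\<lambda>v. 0)"
proof
  fix w
  let ?p = "CHAR('k)"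
  let ?f = "\<lambda>i. of_nat (?p choose i) *s (N ^^ i) w"
  have "?f i = 0" if "i \<in> {..?p} - {0, ?p}" for i
    using that assms(1) dvd_choose_prime[of i ?p] by (simp add: of_nat_eq_0_iff_char_dvd)
  then have "(\<Sum>i\<le>?p. ?f i) = (\<Sum>i\<in>{0, ?p}. ?f i)"
    by (intro sum.mono_neutral_right) auto
  also have "\<dots> = w + (N ^^ ?p) w"
    using prime_gt_1_nat[OF assms(1)] by simp
  finally show "(N ^^ ?p) w = 0"
    using funpow_id_plus_binomial[OF assms(2), of ?p w] assms(3) by simp
qed

section \<open>Commuting nilpotent maps\<close>

lemma foldr_comp_append: "foldr (\<circ>) (fs @ gs) id = foldr (\<circ>) fs id \<circ> foldr (\<circ>) gs id"
  by (induction fs) (simp_all add: comp_assoc)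

lemma foldr_comp_Cons: "foldr (\<circ>) (f # fs) id = f \<circ> foldr (\<circ>) fs id"
  by simp

lemma comp_funpow_commute:
  assumes "f \<circ> g = g \<circ> f"
  shows "f \<circ> g ^^ n = g ^^ n \<circ> f"
proof (induction n)
  case (Suc n)
  have "f \<circ> g ^^ Suc n = (f \<circ> g) \<circ> g ^^ n"
    by (simp only: funpow.simps comp_assoc)
  also have "\<dots> = g \<circ> (f \<circ> g ^^ n)"
    by (simp only: assms comp_assoc)
  also have "\<dots> = g ^^ Suc n \<circ> f"
    by (simp only: Suc.IH funpow.simps comp_assoc)
  finally show ?case .
qed simp

lemma foldr_comp_funpow_filter:
  assumes "\<forall>f\<in>set fs. f \<circ> N = N \<circ> f"
  shows "foldr (\<circ>) fs id = N ^^ length (filter ((=) N) fs) \<circ> foldr (\<circ>) (filter (\<lambda>f. f \<noteq> N) fs) id"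
  using assms
proof (induction fs)
  case (Cons f fs)
  let ?c = "length (filter ((=) N) fs)" and ?R = "foldr (\<circ>) (filter (\<lambda>f. f \<noteq> N) fs) id"
  have IH: "foldr (\<circ>) fs id = N ^^ ?c \<circ> ?R"
    using Cons.prems by (intro Cons.IH) simp
  show ?case
  proof (cases "f = N")
    case True
    have "foldr (\<circ>) (f # fs) id = N \<circ> (N ^^ ?c \<circ> ?R)"
      by (simp only: foldr_comp_Cons IH True)
    also have "\<dots> = N ^^ Suc ?c \<circ> ?R"
      by (simp only: funpow.simps comp_assoc)
    finally show ?thesis
      by (simp only: True filter.simps simp_thms if_True if_False list.size add_Suc_right add_0_right)
  next
    case False
    have comm: "f \<circ> N ^^ ?c = N ^^ ?c \<circ> f"
      using Cons.prems by (intro comp_funpow_commute) (simp add: comp_def)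
    have "foldr (\<circ>) (f # fs) id = f \<circ> (N ^^ ?c \<circ> ?R)"
      by (simp only: foldr_comp_Cons IH)
    also have "\<dots> = N ^^ ?c \<circ> (f \<circ> ?R)"
      by (simp only: comp_assoc[symmetric] comm)
    finally show ?thesis
      using False not_sym[OF False]
      by (simp only: filter.simps simp_thms if_True if_False foldr_comp_Cons)
  qed
qed simp

lemma foldr_comp_commuting_nilpotent:
  assumes "finite S" "\<forall>N\<in>S. N 0 = 0" "\<forall>N\<in>S. \<forall>M\<in>S. N \<circ> M = M \<circ> N"
    and "\<forall>N\<in>S. N ^^ m = (\<lambda>v. 0)" "set fs \<subseteq> S" "card S * m < length fs"
  shows "foldr (\<circ>) fs id = (\<lambda>v::'a::zero. 0)"
  using assms
proof (induction S arbitrary: fs rule: finite_induct)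
  case empty
  then show ?case by simp
next
  case (insert N S)
  let ?c = "length (filter ((=) N) fs)" and ?rest = "filter (\<lambda>f. f \<noteq> N) fs"
  have split: "foldr (\<circ>) fs id = N ^^ ?c \<circ> foldr (\<circ>) ?rest id"
    using foldr_comp_funpow_filter[of fs N] insert.prems by blast
  have N_zero: "(N ^^ n) 0 = 0" for n
    using insert.prems(1) by (induction n) auto
  show ?case
  proof (cases "m \<le> ?c")
    case True
    then have "N ^^ ?c = N ^^ (?c - m) \<circ> N ^^ m"
      by (simp flip: funpow_add)
    then have "N ^^ ?c = (\<lambda>v. 0)"
      using insert.prems(3) N_zero by (simp add: comp_def)
    then show ?thesis
      unfolding split by (simp add: comp_def)
  next
    case False
    have "length fs = ?c + length ?rest"
      using sum_length_filter_compl[of "(=) N" fs] by (simp add: eq_commute)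
    then have "card S * m < length ?rest"
      using insert.prems(5) insert.hyps False by simp
    moreover have "set ?rest \<subseteq> S"
      using insert.prems(4) by auto
    ultimately have "foldr (\<circ>) ?rest id = (\<lambda>v. 0)"
      using insert.IH insert.prems(1-3) by blast
    then show ?thesis
      unfolding split using N_zero by (simp add: comp_def)
  qed
qed

definition word_kernel :: "('a \<Rightarrow> 'a) set \<Rightarrow> nat \<Rightarrow> 'a::zero set" where
  "word_kernel NS j = {v. \<forall>ws. set ws \<subseteq> NS \<longrightarrow> length ws = j \<longrightarrow> foldr (\<circ>) ws id v = 0}"

lemma word_kernel_0 [simp]: "word_kernel NS 0 = {0}"
  by (auto simp: word_kernel_def)

lemma word_kernel_Suc: "v \<in> word_kernel NS (Suc j) \<longleftrightarrow> (\<forall>N\<in>NS. N v \<in> word_kernel NS j)"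
proof -
  have "(\<forall>ws. set ws \<subseteq> NS \<longrightarrow> length ws = Suc j \<longrightarrow> P ws)
    \<longleftrightarrow> (\<forall>N\<in>NS. \<forall>ws. set ws \<subseteq> NS \<longrightarrow> length ws = j \<longrightarrow> P (ws @ [N]))" for P
    by (auto simp: length_Suc_conv_rev)
  then show ?thesis
    unfolding word_kernel_def by (simp del: foldr_append add: foldr_comp_append)
qed

lemma word_kernel_mono:
  assumes "\<forall>N\<in>NS. N 0 = 0" "j \<le> k"
  shows "word_kernel NS j \<subseteq> word_kernel NS k"
  unfolding word_kernel_def
proof (intro subsetI CollectI allI impI)
  fix v ws assume v: "v \<in> {v. \<forall>ws. set ws \<subseteq> NS \<longrightarrow> length ws = j \<longrightarrow> foldr (\<circ>) ws id v = 0}"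
    and ws: "set ws \<subseteq> NS" "length ws = k"
  let ?us = "take (k - j) ws" and ?vs = "drop (k - j) ws"
  have "foldr (\<circ>) ?vs id v = 0"
    using v ws set_drop_subset[of "k - j" ws] assms(2) by auto
  moreover have "foldr (\<circ>) us id 0 = 0" if "set us \<subseteq> NS" for us
    using that assms(1) by (induction us) auto
  ultimately show "foldr (\<circ>) ws id v = 0"
    using foldr_comp_append[of ?us ?vs] ws(1) set_take_subset[of "k - j" ws] by (simp add: fun_eq_iff)
qed

lemma word_kernel_stable:
  assumes "word_kernel NS j = word_kernel NS (Suc j)"
  shows "word_kernel NS (j + k) = word_kernel NS j"
proof (induction k)
  case (Suc k)
  have "v \<in> word_kernel NS (Suc (j + k)) \<longleftrightarrow> v \<in> word_kernel NS (Suc j)" for v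
    unfolding word_kernel_Suc Suc.IH ..
  then show ?case
    using assms by auto
qed simp

lemma subspace_word_kernel:
  fixes NS :: "('k::field ^ 'd \<Rightarrow> 'k ^ 'd) set"
  assumes "\<forall>N\<in>NS. Vector_Spaces.linear (*s) (*s) N"
  shows "vec.subspace (word_kernel NS j)"
proof -
  have "Vector_Spaces.linear (*s) (*s) (foldr (\<circ>) ws id)" if "set ws \<subseteq> NS" for ws
    using that assms
    by (induction ws) (auto intro: Vector_Spaces.linear_compose vec.linear_id)
  then have "vec.subspace {v. foldr (\<circ>) ws id v = 0}" if "set ws \<subseteq> NS" for ws
    using that vec.linear_subspace_kernel by blast
  then have "vec.subspace (\<Inter>ws\<in>{ws. set ws \<subseteq> NS \<and> length ws = j}. {v. foldr (\<circ>) ws id v = 0})"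
    by (intro vec.subspace_Int) auto
  moreover have "word_kernel NS j = (\<Inter>ws\<in>{ws. set ws \<subseteq> NS \<and> length ws = j}. {v. foldr (\<circ>) ws id v = 0})"
    by (auto simp: word_kernel_def)
  ultimately show ?thesis by simp
qed

text \<open>The flag 0 = K_0 \<subseteq> K_1 \<subseteq> \<dots> of word kernels eventually exhausts the space (long words
  vanish), and once K_j = K_{j+1} it is constant; so it increases strictly until it is
  everything, which by dimension happens after at most dim steps.\<close>
lemma word_kernel_dim_eq_UNIV:
  fixes NS :: "('k::field ^ 'd \<Rightarrow> 'k ^ 'd) set"
  assumes "finite NS" and lin: "\<forall>N\<in>NS. Vector_Spaces.linear (*s) (*s) N"
    and "\<forall>N\<in>NS. \<forall>M\<in>NS. N \<circ> M = M \<circ> N" and "\<forall>N\<in>NS. N ^^ m = (\<lambda>v. 0)"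
  shows "word_kernel NS CARD('d) = UNIV"
proof (rule ccontr)
  assume ne: "word_kernel NS CARD('d) \<noteq> UNIV"
  have zero: "\<forall>N\<in>NS. N 0 = 0"
    using lin vec.linear_0 by blast
  let ?L = "Suc (card NS * m)"
  have full: "word_kernel NS ?L = UNIV"
    unfolding word_kernel_def using foldr_comp_commuting_nilpotent[OF assms(1) zero assms(3,4)]
    by (auto simp: fun_eq_iff)
  have strict: "word_kernel NS j \<subset> word_kernel NS (Suc j)" if "j \<le> CARD('d)" for j
  proof -
    have "word_kernel NS j \<noteq> word_kernel NS (Suc j)"
    proof
      assume "word_kernel NS j = word_kernel NS (Suc j)"
      then have "word_kernel NS (j + ?L) = word_kernel NS j"
        by (rule word_kernel_stable)
      then have "UNIV \<subseteq> word_kernel NS CARD('d)"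
        using full word_kernel_mono[OF zero, of ?L "j + ?L"] word_kernel_mono[OF zero that] by auto
      then show False using ne by auto
    qed
    then show ?thesis using word_kernel_mono[OF zero, of j "Suc j"] by auto
  qed
  have "j \<le> vec.dim (word_kernel NS j)" if "j \<le> CARD('d)" for j
    using that
  proof (induction j)
    case (Suc j)
    then have "vec.dim (word_kernel NS j) < vec.dim (word_kernel NS (Suc j))"
      using vec.dim_psubset strict subspace_word_kernel[OF lin] vec.span_eq_iff by (metis Suc_leD)
    then show ?case using Suc by simp
  qed simp
  then have "vec.dim (UNIV :: ('k ^ 'd) set) \<le> vec.dim (word_kernel NS CARD('d))"
    unfolding vec_dim_card by simp
  then have "vec.span (word_kernel NS CARD('d)) = vec.span UNIV"
    by (intro vec.dim_eq_span) simp_all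
  then show False
    using ne subspace_word_kernel[OF lin, of "CARD('d)"] by (simp add: vec.span_eq_iff[THEN iffD2])
qed

definition kernel_lowering :: "('a \<Rightarrow> 'a) set \<Rightarrow> ('a \<Rightarrow> 'a::zero) set" where
  "kernel_lowering NS = {T. \<forall>j. \<forall>v\<in>word_kernel NS (Suc j). T v \<in> word_kernel NS j}"

lemma kernel_lowering_generator: "N \<in> NS \<Longrightarrow> N \<in> kernel_lowering NS"
  by (simp add: kernel_lowering_def word_kernel_Suc)

context
  fixes NS :: "('k::field ^ 'd \<Rightarrow> 'k ^ 'd) set"
  assumes linear_NS: "\<forall>N\<in>NS. Vector_Spaces.linear (*s) (*s) N"
begin

lemma kernel_lowering_zero: "(\<lambda>v. 0) \<in> kernel_lowering NS"
  using subspace_word_kernel[OF linear_NS] by (simp add: kernel_lowering_def vec.subspace_0)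

lemma kernel_lowering_add:
  "S \<in> kernel_lowering NS \<Longrightarrow> T \<in> kernel_lowering NS \<Longrightarrow> (\<lambda>v. S v + T v) \<in> kernel_lowering NS"
  using subspace_word_kernel[OF linear_NS] by (simp add: kernel_lowering_def vec.subspace_add)

lemma kernel_lowering_scale:
  "T \<in> kernel_lowering NS \<Longrightarrow> (\<lambda>v. c *s T v) \<in> kernel_lowering NS"
  using subspace_word_kernel[OF linear_NS] by (simp add: kernel_lowering_def vec.subspace_scale)

lemma kernel_lowering_comp:
  assumes "S \<in> kernel_lowering NS" "T \<in> kernel_lowering NS"
  shows "S \<circ> T \<in> kernel_lowering NS"
proof -
  have "word_kernel NS j \<subseteq> word_kernel NS (Suc j)" for j
    using linear_NS vec.linear_0 by (intro word_kernel_mono) auto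
  then show ?thesis
    using assms unfolding kernel_lowering_def by fastforce
qed

lemma foldr_comp_kernel_lowering:
  assumes "set Ts \<subseteq> kernel_lowering NS" "v \<in> word_kernel NS (j + length Ts)"
  shows "foldr (\<circ>) Ts id v \<in> word_kernel NS j"
  using assms
proof (induction Ts arbitrary: j)
  case (Cons T Ts)
  have "foldr (\<circ>) Ts id v \<in> word_kernel NS (Suc j)"
    using Cons.prems by (intro Cons.IH) auto
  then show ?case
    using Cons.prems(1) unfolding foldr_comp_Cons kernel_lowering_def by simp
qed simp

end

section \<open>The t-adic filtration and diagonal blocks\<close>

definition ord_ge :: "int \<Rightarrow> ('k::field, 'd::finite) lsv set" where
  "ord_ge n = {x. \<forall>s m. m < n \<longrightarrow> fls_nth (x $ s) m = 0}"

definition coeff_vec :: "int \<Rightarrow> ('k::field, 'd::finite) lsv \<Rightarrow> 'k ^ 'd" where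
  "coeff_vec n x = (\<chi> s. fls_nth (x $ s) n)"

definition monom_vec :: "int \<Rightarrow> 'k::field ^ 'd::finite \<Rightarrow> ('k, 'd) lsv" where
  "monom_vec n w = (\<chi> s. fls_shift (- n) (fls_const (w $ s)))"

definition block_op :: "int \<Rightarrow> int \<Rightarrow> (('k::field, 'd::finite) lsv \<Rightarrow> ('k, 'd) lsv) \<Rightarrow> 'k ^ 'd \<Rightarrow> 'k ^ 'd" where
  "block_op i j A w = coeff_vec i (A (monom_vec j w))"

definition filtered :: "(('k::field, 'd::finite) lsv \<Rightarrow> ('k, 'd) lsv) \<Rightarrow> bool" where
  "filtered A \<longleftrightarrow> Modules.additive A \<and> (\<forall>n. A ` ord_ge n \<subseteq> ord_ge n)"

lemma coeff_vec_nth [simp]: "coeff_vec n x $ s = fls_nth (x $ s) n"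
  by (simp add: coeff_vec_def)

lemma fls_nth_monom_vec [simp]: "fls_nth (monom_vec n w $ s) m = (if m = n then w $ s else 0)"
  by (simp add: monom_vec_def)

lemma monom_vec_ord_ge: "monom_vec n w \<in> ord_ge n"
  by (simp add: ord_ge_def)

lemma additive_coeff_vec: "Modules.additive (coeff_vec n)"
  by (simp add: Modules.additive_def vec_eq_iff)

lemma additive_monom_vec: "Modules.additive (monom_vec n)"
  by (simp add: Modules.additive_def monom_vec_def vec_eq_iff fls_plus_const[symmetric])

lemma ord_ge_zero: "0 \<in> ord_ge n"
  and ord_ge_add: "x \<in> ord_ge n \<Longrightarrow> y \<in> ord_ge n \<Longrightarrow> x + y \<in> ord_ge n"
  and ord_ge_diff: "x \<in> ord_ge n \<Longrightarrow> y \<in> ord_ge n \<Longrightarrow> x - y \<in> ord_ge n"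
  and ord_ge_smult: "x \<in> ord_ge n \<Longrightarrow> (\<chi> j. fls_const c * x $ j) \<in> ord_ge n"
  by (simp_all add: ord_ge_def fls_mult_const_nth)

lemma ord_ge_antimono: "m \<le> n \<Longrightarrow> ord_ge n \<subseteq> ord_ge m"
  by (auto simp: ord_ge_def)

lemma diff_monom_coeff_ord_ge: "x \<in> ord_ge n \<Longrightarrow> x - monom_vec n (coeff_vec n x) \<in> ord_ge (n + 1)"
  by (auto simp: ord_ge_def)

lemma coeff_vec_eq_0: "x \<in> ord_ge (n + 1) \<Longrightarrow> coeff_vec n x = 0"
  by (simp add: ord_ge_def vec_eq_iff)

lemma filtered_additive: "filtered A \<Longrightarrow> Modules.additive A"
  and filtered_ord_ge: "filtered A \<Longrightarrow> x \<in> ord_ge n \<Longrightarrow> A x \<in> ord_ge n"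
  by (auto simp: filtered_def)

lemma coeff_vec_filtered:
  assumes "filtered A" "x \<in> ord_ge n"
  shows "coeff_vec n (A x) = block_op n n A (coeff_vec n x)"
proof -
  let ?m = "monom_vec n (coeff_vec n x)"
  have "A x = A (?m + (x - ?m))"
    by simp
  also have "\<dots> = A ?m + A (x - ?m)"
    by (rule additive.add[OF filtered_additive[OF assms(1)]])
  finally have "coeff_vec n (A x) = coeff_vec n (A ?m) + coeff_vec n (A (x - ?m))"
    by (simp add: additive.add[OF additive_coeff_vec])
  moreover have "coeff_vec n (A (x - ?m)) = 0"
    using filtered_ord_ge[OF assms(1) diff_monom_coeff_ord_ge[OF assms(2)]] by (rule coeff_vec_eq_0)
  ultimately show ?thesis
    by (simp add: block_op_def)
qed

lemma block_op_comp:
  assumes "filtered A" "filtered B"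
  shows "block_op n n (A \<circ> B) = block_op n n A \<circ> block_op n n B"
  using coeff_vec_filtered[OF assms(1) filtered_ord_ge[OF assms(2) monom_vec_ord_ge]]
  by (simp add: block_op_def fun_eq_iff)

lemma block_op_id: "block_op n n (\<lambda>v. v) = (\<lambda>w. w)"
  and block_op_zero: "block_op i j (\<lambda>v. 0) = (\<lambda>w. 0)"
  and block_op_add: "block_op i j (\<lambda>v. A v + B v) = (\<lambda>w. block_op i j A w + block_op i j B w)"
  and block_op_diff: "block_op i j (\<lambda>v. A v - B v) = (\<lambda>w. block_op i j A w - block_op i j B w)"
  and block_op_smult: "block_op i j (\<lambda>v. \<chi> k. fls_const c * A v $ k) = (\<lambda>w. c *s block_op i j A w)"
  by (simp_all add: block_op_def fun_eq_iff vec_eq_iff fls_mult_const_nth)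

lemma block_op_axis:
  fixes A :: "('k::field, 'd::finite) lsv \<Rightarrow> ('k, 'd) lsv"
  shows "block_op i j A (axis s 1) $ r = block A i j $ r $ s"
proof -
  have "monom_vec j (axis s (1::'k)) = (\<chi> s'. if s' = s then fls_X_intpow j else 0)"
    by (simp add: vec_eq_iff monom_vec_def axis_def fls_const_1)
  then show ?thesis
    by (simp only: block_op_def block_def coeff_vec_nth vec_lambda_beta)
qed

lemma linear_block_op:
  assumes "prime CARD('k::{field,finite})" "Modules.additive (A :: ('k, 'd::finite) lsv \<Rightarrow> _)"
  shows "Vector_Spaces.linear (*s) (*s) (block_op i j A)"
proof -
  have "Modules.additive (block_op i j A)"
    by (simp add: Modules.additive_def block_op_def additive.add[OF additive_monom_vec]
        additive.add[OF additive_coeff_vec] additive.add[OF assms(2)])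
  then show ?thesis
    by (rule linear_if_additive_prime_field[OF assms(1)])
qed

lemma block_op_eq_0_if_block_eq_0:
  assumes "prime CARD('k::{field,finite})" "Modules.additive (A :: ('k, 'd::finite) lsv \<Rightarrow> _)"
    and "block A i j = 0"
  shows "block_op i j A w = 0"
proof -
  note lin = linear_block_op[OF assms(1,2), of i j]
  have "block_op i j A w = block_op i j A (\<Sum>s\<in>UNIV. (w $ s) *s axis s 1)"
    by (simp only: basis_expansion)
  also have "\<dots> = (\<Sum>s\<in>UNIV. (w $ s) *s block_op i j A (axis s 1))"
    by (simp add: vec.linear_sum[OF lin] vec.linear_scale[OF lin])
  also have "\<dots> = 0"
    using assms(3) by (simp add: vec_eq_iff block_op_axis)
  finally show ?thesis .
qed

lemma filtered_id: "filtered (\<lambda>v. v)"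
  and filtered_zero: "filtered (\<lambda>v. 0)"
  by (auto simp: filtered_def Modules.additive_def ord_ge_zero)

lemma filtered_add: "filtered A \<Longrightarrow> filtered B \<Longrightarrow> filtered (\<lambda>v. A v + B v)"
  and filtered_diff: "filtered A \<Longrightarrow> filtered B \<Longrightarrow> filtered (\<lambda>v. A v - B v)"
  and filtered_comp: "filtered A \<Longrightarrow> filtered B \<Longrightarrow> filtered (A \<circ> B)"
  unfolding filtered_def Modules.additive_def image_subset_iff
  by (auto simp: algebra_simps intro!: ord_ge_add ord_ge_diff)

lemma filtered_smult: "filtered A \<Longrightarrow> filtered (\<lambda>v. \<chi> j. fls_const c * A v $ j)"
  unfolding filtered_def Modules.additive_def image_subset_iff
  by (auto simp: vec_eq_iff distrib_left intro!: ord_ge_smult)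

section \<open>Lower triangular continuous maps preserve the filtration\<close>

lemma fls_nth_eq_0_if_dist_0_less:
  fixes f :: "'k::field fls"
  assumes "dist f 0 < inverse (2 ^ nat n)" and "m \<le> n"
  shows "fls_nth f m = 0"
proof (cases "f = 0")
  case False
  show ?thesis
  proof (cases "fls_subdegree f < 0")
    case True
    have "dist f 0 = 2 ^ nat (- fls_subdegree f)"
      using False True by (simp add: dist_fls_def)
    moreover have "inverse (2 ^ nat n) \<le> (1::real)" and "(1::real) \<le> 2 ^ nat (- fls_subdegree f)"
      by (simp_all add: inverse_le_1_iff)
    ultimately show ?thesis
      using assms(1) by linarith
  next
    case nonneg: False
    then have "(2::real) ^ nat n < 2 ^ nat (fls_subdegree f)"
      using assms(1) False by (simp add: dist_fls_def inverse_less_iff_less)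
    then have "m < fls_subdegree f"
      using assms(2) nonneg by simp
    then show ?thesis
      by (rule fls_eq0_below_subdegree)
  qed
qed simp

lemma dist_0_le_if_fls_nth_eq_0:
  fixes f :: "'k::field fls"
  assumes "\<And>m. m < int N \<Longrightarrow> fls_nth f m = 0"
  shows "dist f 0 \<le> inverse (2 ^ N)"
proof (cases "f = 0")
  case False
  then have "int N \<le> fls_subdegree f"
    using assms nth_fls_subdegree_nonzero not_le by blast
  then show ?thesis
    using False by (simp add: dist_fls_def le_nat_iff le_imp_inverse_le power_increasing)
qed simp

lemma dist_0_le_if_ord_ge:
  assumes "(y :: ('k::field, 'd::finite) lsv) \<in> ord_ge (int N)"
  shows "dist y 0 \<le> CARD('d) * inverse (2 ^ N)"
proof -
  have "dist y 0 = L2_set (\<lambda>s. dist (y $ s) 0) UNIV"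
    by (simp add: dist_vec_def)
  also have "\<dots> \<le> (\<Sum>s\<in>UNIV. dist (y $ s) 0)"
    by (rule L2_set_le_sum) simp
  also have "\<dots> \<le> (\<Sum>s\<in>(UNIV :: 'd set). inverse (2 ^ N))"
    using assms by (intro sum_mono dist_0_le_if_fls_nth_eq_0) (simp add: ord_ge_def)
  finally show ?thesis
    by simp
qed

lemma ord_ge_if_dist_0_less:
  assumes "dist (y :: ('k::field, 'd::finite) lsv) 0 < inverse (2 ^ nat n)"
  shows "y \<in> ord_ge n"
  unfolding ord_ge_def
proof (intro CollectI allI impI)
  fix s m assume "m < n"
  have "dist (y $ s) 0 < inverse (2 ^ nat n)"
    using dist_vec_nth_le[of y s 0] assms by simp
  then show "fls_nth (y $ s) m = 0"
    using \<open>m < n\<close> by (intro fls_nth_eq_0_if_dist_0_less) auto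
qed

lemma continuous_ord_ge_image_subset:
  fixes A :: "('k::field, 'd::finite) lsv \<Rightarrow> ('k, 'd) lsv"
  assumes "continuous_on UNIV A" "A 0 = 0"
  obtains N where "A ` ord_ge (int N) \<subseteq> ord_ge n"
proof -
  obtain \<delta> where "\<delta> > 0" and \<delta>: "\<And>y. dist y 0 < \<delta> \<Longrightarrow> dist (A y) 0 < inverse (2 ^ nat n)"
    using assms unfolding continuous_on_iff by (metis UNIV_I inverse_positive_iff_positive zero_less_power zero_less_numeral)
  then obtain N where N: "(1/2::real) ^ N < \<delta> / (CARD('d) + 1)"
    using real_arch_pow_inv[of "\<delta> / (CARD('d) + 1)" "1/2"] by auto
  have "CARD('d) * inverse (2 ^ N) \<le> (CARD('d) + 1) * (1/2::real) ^ N"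
    by (simp add: power_one_over field_simps)
  also have "\<dots> < \<delta>"
    using N by (simp add: less_divide_eq mult.commute)
  finally have small: "CARD('d) * inverse (2 ^ N) < \<delta>" .
  have "A y \<in> ord_ge n" if "y \<in> ord_ge (int N)" for y
    using dist_0_le_if_ord_ge[OF that] small by (intro ord_ge_if_dist_0_less \<delta>) simp
  then show thesis
    using that by blast
qed

text \<open>Descending induction from N: an element of ord_ge j is its t^j-term plus an element of
  ord_ge (j + 1).\<close>
lemma ord_ge_image_subset_self:
  fixes A :: "('k::field, 'd::finite) lsv \<Rightarrow> ('k, 'd) lsv"
  assumes "Modules.additive A" "A ` ord_ge N \<subseteq> ord_ge n"
    and "\<And>j w. n \<le> j \<Longrightarrow> A (monom_vec j w) \<in> ord_ge n"
  shows "A ` ord_ge n \<subseteq> ord_ge n"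
proof -
  have "n \<le> j \<longrightarrow> A ` ord_ge j \<subseteq> ord_ge n" if "j \<le> max N n" for j
    using that
  proof (induction j rule: int_le_induct)
    case base
    then show ?case
      using assms(2) ord_ge_antimono[of N "max N n"] by auto
  next
    case (step j)
    show ?case
    proof (intro impI image_subsetI)
      fix y :: "('k, 'd) lsv" assume "n \<le> j - 1" and y: "y \<in> ord_ge (j - 1)"
      let ?m = "monom_vec (j - 1) (coeff_vec (j - 1) y)"
      have "A (y - ?m) \<in> ord_ge n"
        using step.IH \<open>n \<le> j - 1\<close> diff_monom_coeff_ord_ge[OF y] by auto
      moreover have "A y = A ?m + A (y - ?m)"
        using additive.add[OF assms(1), of ?m "y - ?m"] by simp
      ultimately show "A y \<in> ord_ge n"
        using assms(3) \<open>n \<le> j - 1\<close> by (simp add: ord_ge_add)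
    qed
  qed
  then show ?thesis
    by simp
qed

lemma filtered_if_lower_triangular:
  fixes A :: "('k::{field,finite}, 'd::finite) lsv \<Rightarrow> ('k, 'd) lsv"
  assumes "prime CARD('k)" "Modules.additive A" "continuous_on UNIV A"
    and "\<And>i j. j > i \<Longrightarrow> block A i j = 0"
  shows "filtered A"
proof -
  have monom: "A (monom_vec j w) \<in> ord_ge n" if "n \<le> j" for n j w
    using that block_op_eq_0_if_block_eq_0[OF assms(1,2) assms(4)]
    by (auto simp: ord_ge_def block_op_def vec_eq_iff)
  have "A ` ord_ge n \<subseteq> ord_ge n" for n
  proof -
    obtain N where "A ` ord_ge (int N) \<subseteq> ord_ge n"
      using continuous_ord_ge_image_subset[OF assms(3) additive.zero[OF assms(2)]] .
    then show ?thesis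
      using monom by (rule ord_ge_image_subset_self[OF assms(2)])
  qed
  then show ?thesis
    using assms(2) by (simp add: filtered_def)
qed

section \<open>The diagonal blocks of the algebra\<close>

lemma filtered_funpow:
  assumes "filtered A"
  shows "filtered (A ^^ k)"
proof (induction k)
  case 0
  then show ?case using filtered_id by (simp add: id_def)
next
  case (Suc k)
  then show ?case
    unfolding funpow.simps(2) by (rule filtered_comp[OF assms])
qed

lemma block_op_funpow:
  assumes "filtered A"
  shows "block_op n n (A ^^ k) = block_op n n A ^^ k"
proof (induction k)
  case 0
  then show ?case by (simp add: id_def block_op_id)
next
  case (Suc k)
  have "block_op n n (A ^^ Suc k) = block_op n n A \<circ> block_op n n (A ^^ k)"
    unfolding funpow.simps(2) by (rule block_op_comp[OF assms filtered_funpow[OF assms]])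
  then show ?case
    by (simp only: Suc.IH funpow.simps(2))
qed

lemma filtered_foldr_comp:
  assumes "\<forall>A\<in>set As. filtered A"
  shows "filtered (foldr (\<circ>) As id)"
  using assms
proof (induction As)
  case Nil
  then show ?case using filtered_id by (simp add: id_def)
next
  case (Cons A As)
  then show ?case
    unfolding foldr_comp_Cons by (intro filtered_comp Cons.IH) auto
qed

lemma block_op_foldr_comp:
  assumes "\<forall>A\<in>set As. filtered A"
  shows "block_op n n (foldr (\<circ>) As id) = foldr (\<circ>) (map (block_op n n) As) id"
  using assms
proof (induction As)
  case Nil
  then show ?case by (simp add: id_def block_op_id)
next
  case (Cons A As)
  have IH: "block_op n n (foldr (\<circ>) As id) = foldr (\<circ>) (map (block_op n n) As) id"
    using Cons.prems by (intro Cons.IH) auto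
  have "block_op n n (foldr (\<circ>) (A # As) id) = block_op n n A \<circ> block_op n n (foldr (\<circ>) As id)"
    unfolding foldr_comp_Cons using Cons.prems by (intro block_op_comp filtered_foldr_comp) auto
  then show ?case
    unfolding IH list.map foldr_comp_Cons .
qed

lemma nilpotent_block_op_diff_id:
  fixes U :: "('k::{field,finite}, 'd::finite) lsv \<Rightarrow> ('k, 'd) lsv"
  assumes "prime CARD('k)" "filtered U" "U ^^ CARD('k) = id"
  shows "block_op n n (\<lambda>v. U v - v) ^^ CARD('k) = (\<lambda>w. 0)"
proof -
  let ?N = "block_op n n (\<lambda>v. U v - v)"
  have char: "CHAR('k) = CARD('k)"
    by (rule CHAR_eq_CARD_if_prime[OF assms(1)])
  have "(\<lambda>w. w + ?N w) = block_op n n U"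
    by (simp add: block_op_diff block_op_id)
  then have "(\<lambda>w. w + ?N w) ^^ CHAR('k) = block_op n n (U ^^ CARD('k))"
    by (simp only: char block_op_funpow[OF assms(2)])
  also have "\<dots> = id"
    unfolding assms(3) id_def by (rule block_op_id)
  finally have unipotent: "(\<lambda>w. w + ?N w) ^^ CHAR('k) = id" .
  have "Vector_Spaces.linear (*s) (*s) ?N"
    using assms(1,2) by (intro linear_block_op filtered_additive filtered_diff filtered_id)
  from nilpotent_if_unipotent_char[OF _ this unipotent] show ?thesis
    using assms(1) by (simp only: char)
qed

lemma filtered_kernel_lowering_gen_alg:
  fixes G :: "(('k::{field,finite}, 'd::finite) lsv \<Rightarrow> ('k, 'd) lsv) set"
  assumes "prime CARD('k)" "\<forall>g\<in>G. filtered g" "a \<in> gen_alg G"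
  shows "filtered a \<and> block_op n n a \<in> kernel_lowering (block_op n n ` G)"
proof -
  have lin: "\<forall>N\<in>block_op n n ` G. Vector_Spaces.linear (*s) (*s) N"
    using assms(1,2) linear_block_op filtered_additive by blast
  from assms(3) show ?thesis
  proof (induction rule: gen_alg.induct)
    case (gen a)
    then show ?case using assms(2) kernel_lowering_generator by blast
  next
    case zero
    then show ?case by (simp add: filtered_zero block_op_zero kernel_lowering_zero[OF lin])
  next
    case (add a b)
    then show ?case by (simp add: filtered_add block_op_add kernel_lowering_add[OF lin])
  next
    case (smult a c)
    then show ?case by (simp add: filtered_smult block_op_smult kernel_lowering_scale[OF lin])
  next
    case (comp a b)
    then have "filtered a" "filtered b" by simp_all
    then show ?case
      unfolding block_op_comp[OF \<open>filtered a\<close> \<open>filtered b\<close>]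
      using comp.IH by (intro conjI filtered_comp kernel_lowering_comp[OF lin]) simp_all
  qed
qed

lemma diag_block_alg_pow_eq_0:
  fixes G :: "(('k::{field,finite}, 'd::finite) lsv \<Rightarrow> ('k, 'd) lsv) set"
  assumes p: "prime CARD('k)" and filt: "\<forall>g\<in>G. filtered g"
    and comm: "\<forall>g\<in>G. \<forall>h\<in>G. g \<circ> h = h \<circ> g"
    and nil: "\<forall>g\<in>G. block_op n n g ^^ CARD('k) = (\<lambda>w. 0)"
    and B: "B \<in> alg_pow (gen_alg G) CARD('d)"
  shows "block B n n = 0"
proof -
  let ?NS = "block_op n n ` G"
  have lin: "\<forall>N\<in>?NS. Vector_Spaces.linear (*s) (*s) N"
    using p filt linear_block_op filtered_additive by blast
  have "\<forall>N\<in>?NS. \<forall>M\<in>?NS. N \<circ> M = M \<circ> N"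
    using filt comm by (auto simp flip: block_op_comp)
  then have full: "word_kernel ?NS CARD('d) = UNIV"
    using nil by (intro word_kernel_dim_eq_UNIV lin) auto
  obtain As where As: "B = foldr (\<circ>) As id" "length As = CARD('d)" "set As \<subseteq> gen_alg G"
    using B unfolding alg_pow_def by blast
  then have lowering: "\<forall>A\<in>set As. filtered A \<and> block_op n n A \<in> kernel_lowering ?NS"
    using filtered_kernel_lowering_gen_alg[OF p filt] by blast
  then have "block_op n n B = foldr (\<circ>) (map (block_op n n) As) id"
    unfolding As(1) by (intro block_op_foldr_comp) simp
  then have "block_op n n B w \<in> word_kernel ?NS 0" for w
    using lowering by (simp only:) (intro foldr_comp_kernel_lowering[OF lin]; auto simp: full As(2))
  then have "block_op n n B w = 0" for w
    by simp
  then show ?thesis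
    by (simp add: vec_eq_iff flip: block_op_axis)
qed

lemma comp_diff_id_commute:
  assumes "Modules.additive U" "Modules.additive V" "U \<circ> V = V \<circ> U"
  shows "(\<lambda>v. U v - v) \<circ> (\<lambda>v. V v - v) = (\<lambda>v. V v - v) \<circ> (\<lambda>v. U v - v)"
proof
  fix v
  have "U (V v) = V (U v)"
    using assms(3) by (metis comp_apply)
  then show "((\<lambda>v. U v - v) \<circ> (\<lambda>v. V v - v)) v = ((\<lambda>v. V v - v) \<circ> (\<lambda>v. U v - v)) v"
    by (simp add: additive.diff[OF assms(1)] additive.diff[OF assms(2)] algebra_simps)
qed

lemma hom_funpow_eq_id:
  fixes \<phi> :: "'a::semiring_1 \<Rightarrow> 'b \<Rightarrow> 'b"
  assumes hom: "\<And>f g. \<phi> (f + g) = \<phi> f \<circ> \<phi> g" and "inj (\<phi> 0)" and "of_nat n = (0::'a)"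
  shows "\<phi> f ^^ n = id"
proof -
  have "\<phi> 0 (\<phi> 0 x) = \<phi> 0 x" for x
    using hom[of 0 0] by (metis add_0 comp_apply)
  then have phi_0: "\<phi> 0 = id"
    using assms(2) by (auto simp: inj_def)
  have "\<phi> f ^^ k = \<phi> (of_nat k * f)" for k
  proof (induction k)
    case (Suc k)
    then show ?case
      by (simp add: hom[symmetric] algebra_simps)
  qed (simp add: phi_0)
  then show ?thesis
    using assms(3) phi_0 by simp
qed

theorem mainTheorem15:
  fixes \<phi> :: "'k::{field,finite} fls \<Rightarrow> ('k fls ^ 'd::finite \<Rightarrow> 'k fls ^ 'd)"
  assumes p_prime: "prime CARD('k)"
    and into_Aut: "\<And>f. \<phi> f \<in> Aut"
    and hom: "\<And>f g. \<phi> (f + g) = \<phi> f \<circ> \<phi> g"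
    and cont: "continuous_map euclidean braconnier_top \<phi>"
    and twist: "\<And>f. \<phi> (fls_X * f) = tau \<circ> \<phi> f \<circ> tau_inv"
    and lower: "\<And>f i j. j > i \<Longrightarrow> block (\<phi> f) i j = 0"
  shows "\<forall>B \<in> alg_pow (gen_alg {(\<lambda>v. \<phi> (fls_X_intpow r) v - v) | r. True}) CARD('d).
           \<forall>i::int. block B i i = 0"
proof (intro ballI allI)
  let ?G = "{(\<lambda>v. \<phi> (fls_X_intpow r) v - v) | r. True}"
  fix B i
  assume B: "B \<in> alg_pow (gen_alg ?G) CARD('d)"
  have filt: "filtered (\<phi> f)" for f
    using into_Aut[of f] by (intro filtered_if_lower_triangular p_prime lower)
      (auto simp: Aut_def is_End_def Modules.additive_def)
  have "(of_nat CARD('k) :: 'k fls) = 0"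
    using of_nat_CHAR[where 'a = 'k] by (simp add: fls_of_nat CHAR_eq_CARD_if_prime[OF p_prime])
  then have order: "\<phi> f ^^ CARD('k) = id" for f
    using into_Aut[of 0] by (intro hom_funpow_eq_id hom) (simp_all add: Aut_def bij_is_inj)
  have comm: "\<phi> f \<circ> \<phi> g = \<phi> g \<circ> \<phi> f" for f g
    by (metis hom add.commute)
  show "block B i i = 0"
  proof (rule diag_block_alg_pow_eq_0[OF p_prime _ _ _ B])
    show "\<forall>g\<in>?G. filtered g"
      using filt filtered_diff filtered_id by blast
    show "\<forall>g\<in>?G. \<forall>h\<in>?G. g \<circ> h = h \<circ> g"
      using comp_diff_id_commute filtered_additive filt comm by blast
    show "\<forall>g\<in>?G. block_op i i g ^^ CARD('k) = (\<lambda>w. 0)"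
      using nilpotent_block_op_diff_id[OF p_prime filt order] by blast
  qed
qed

end
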